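(* Let $\{D_1,\ldots,D_n\}$ be a program (a finite set of $D$-formulas) and let $G$ be a goal ($G$-formula), in the language and operational semantics described in the context. Then $ex(\{D_1,\ldots,D_n\},G)$ terminates with a success if and only if $G$ follows from $\{!D_1,\ldots,!D_n\}$ in intuitionistic affine logic (intuitionistic linear logic together with the weakening rule).
   Context: Formulas are first-order, built over atomic formulas $A$. Goals ($G$-formulas) and modules ($D$-formulas) are given by the grammar $G ::= A \mid G\land G \mid D \Rightarrow G \mid \exists x\, G$, $D ::= A \mid G\supset D \mid \forall x\, D \mid D \sqcap D \mid D\land D$. A program $\mathcal{P}$ is a set of $D$-formulas. The connective $\sqcap$ is the choice-conjunction (additive conjunction $\&$) of linear logic. When read as formulas of intuitionistic affine logic, $D \Rightarrow G$ means that $D$ is added as a reusable clause for solving $G$ (i.e. $!D \multimap G$), $G\supset D$ is implication from the goal $G$ to $D$, and $!D$ marks $D$ as a reusable clause. Execution $ex(\mathcal{P},G)$ and backchaining $bchain(D,\mathcal{P},A)$ are defined by the rules: (1) $bchain(A,\mathcal{P},A)$ holds (success); (2) $bchain(G_1\supset D,\mathcal{P},A)$ if $ex(\mathcal{P},G_1)$ and $bchain(D,\mathcal{P},A)$; (3) $bchain(\forall x\,D,\mathcal{P},A)$ if $bchain([t/x]D,\mathcal{P},A)$ for some term $t$; (4) $bchain(D_0\land D_1,\mathcal{P},A)$ if $bchain(D_0,\mathcal{P},A)$; (5) $bchain(D_0\land D_1,\mathcal{P},A)$ if $bchain(D_1,\mathcal{P},A)$; (6) $bchain(D_0\sqcap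 D_1,\mathcal{P},A)$ if one chooses a successful one between $bchain(D_0,\mathcal{P},A)$ and $bchain(D_1,\mathcal{P},A)$ (the unchosen one is discarded); (7) $ex(\mathcal{P},A)$ if $D\in\mathcal{P}$ and $bchain(D,\mathcal{P},A)$; (8) $ex(\mathcal{P},G_1\land G_2)$ if $ex(\mathcal{P},G_1)$ and $ex(\mathcal{P},G_2)$; (9) $ex(\mathcal{P},\exists x\,G_1)$ if $ex(\mathcal{P},[t/x]G_1)$ for some term $t$; (10) $ex(\mathcal{P},D\Rightarrow G_1)$ if $ex(\{D\}\cup\mathcal{P},G_1)$. *)

theory Defs
  imports Main "HOL-Library.Multiset"
begin

section \<open>First-order terms and atoms (de Bruijn indices for variables)\<close>

datatype 'f trm = V nat | Fn 'f "'f trm list"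

datatype ('f, 'p) atm = Atm 'p "'f trm list"

primrec liftT :: "nat \<Rightarrow> 'f trm \<Rightarrow> 'f trm" where
  "liftT k (V i) = (if i < k then V i else V (Suc i))"
| "liftT k (Fn f ts) = Fn f (map (liftT k) ts)"

primrec substT :: "nat \<Rightarrow> 'f trm \<Rightarrow> 'f trm \<Rightarrow> 'f trm" where
  "substT k t (V i) = (if i < k then V i else if i = k then t else V (i - 1))"
| "substT k t (Fn f ts) = Fn f (map (substT k t) ts)"

primrec liftA :: "nat \<Rightarrow> ('f,'p) atm \<Rightarrow> ('f,'p) atm" where
  "liftA k (Atm p ts) = Atm p (map (liftT k) ts)"

primrec substA :: "nat \<Rightarrow> 'f trm \<Rightarrow> ('f,'p) atm \<Rightarrow> ('f,'p) atm" where
  "substA k t (Atm p ts) = Atm p (map (substT k t) ts)"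

section \<open>Goals (G-formulas) and modules (D-formulas)\<close>

datatype ('f, 'p) goal =
    GAtom "('f,'p) atm"
  | GAnd "('f,'p) goal" "('f,'p) goal"
  | GAssume "('f,'p) prog" "('f,'p) goal"
  | GEx "('f,'p) goal"                          \<comment> \<open>\<exists>x G (bound var = index 0)\<close>
and ('f, 'p) prog =
    DAtom "('f,'p) atm"
  | DImp "('f,'p) goal" "('f,'p) prog"
  | DAll "('f,'p) prog"
  | DChoice "('f,'p) prog" "('f,'p) prog"
  | DAnd "('f,'p) prog" "('f,'p) prog"

primrec substG :: "nat \<Rightarrow> 'f trm \<Rightarrow> ('f,'p) goal \<Rightarrow> ('f,'p) goal"
and substD :: "nat \<Rightarrow> 'f trm \<Rightarrow> ('f,'p) prog \<Rightarrow> ('f,'p) prog" where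
  "substG k t (GAtom a) = GAtom (substA k t a)"
| "substG k t (GAnd g1 g2) = GAnd (substG k t g1) (substG k t g2)"
| "substG k t (GAssume d g) = GAssume (substD k t d) (substG k t g)"
| "substG k t (GEx g) = GEx (substG (Suc k) (liftT 0 t) g)"
| "substD k t (DAtom a) = DAtom (substA k t a)"
| "substD k t (DImp g d) = DImp (substG k t g) (substD k t d)"
| "substD k t (DAll d) = DAll (substD (Suc k) (liftT 0 t) d)"
| "substD k t (DChoice d1 d2) = DChoice (substD k t d1) (substD k t d2)"
| "substD k t (DAnd d1 d2) = DAnd (substD k t d1) (substD k t d2)"

inductive ex :: "('f,'p) prog set \<Rightarrow> ('f,'p) goal \<Rightarrow> bool"
and bchain :: "('f,'p) prog \<Rightarrow> ('f,'p) prog set \<Rightarrow> ('f,'p) atm \<Rightarrow> bool" where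
  bc_atom: "bchain (DAtom A) P A"
| bc_imp: "ex P G1 \<Longrightarrow> bchain D P A \<Longrightarrow> bchain (DImp G1 D) P A"
| bc_all: "bchain (substD 0 t D) P A \<Longrightarrow> bchain (DAll D) P A"
| bc_and1: "bchain D0 P A \<Longrightarrow> bchain (DAnd D0 D1) P A"
| bc_and2: "bchain D1 P A \<Longrightarrow> bchain (DAnd D0 D1) P A"
| bc_choice1: "bchain D0 P A \<Longrightarrow> bchain (DChoice D0 D1) P A"
| bc_choice2: "bchain D1 P A \<Longrightarrow> bchain (DChoice D0 D1) P A"
| ex_atom: "D \<in> P \<Longrightarrow> bchain D P A \<Longrightarrow> ex P (GAtom A)"
| ex_and: "ex P G1 \<Longrightarrow> ex P G2 \<Longrightarrow> ex P (GAnd G1 G2)"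
| ex_ex: "ex P (substG 0 t G1) \<Longrightarrow> ex P (GEx G1)"
| ex_assume: "ex (insert D P) G1 \<Longrightarrow> ex P (GAssume D G1)"

datatype ('f, 'p) lform =
    LAtom "('f,'p) atm"
  | LOne | LTop | LZero
  | LTensor "('f,'p) lform" "('f,'p) lform"
  | LWith "('f,'p) lform" "('f,'p) lform"
  | LPlus "('f,'p) lform" "('f,'p) lform"
  | LLolli "('f,'p) lform" "('f,'p) lform"
  | LBang "('f,'p) lform"
  | LAll "('f,'p) lform"
  | LEx "('f,'p) lform"

primrec liftL :: "nat \<Rightarrow> ('f,'p) lform \<Rightarrow> ('f,'p) lform" where
  "liftL k (LAtom a) = LAtom (liftA k a)"
| "liftL k LOne = LOne"
| "liftL k LTop = LTop"
| "liftL k LZero = LZero"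
| "liftL k (LTensor A B) = LTensor (liftL k A) (liftL k B)"
| "liftL k (LWith A B) = LWith (liftL k A) (liftL k B)"
| "liftL k (LPlus A B) = LPlus (liftL k A) (liftL k B)"
| "liftL k (LLolli A B) = LLolli (liftL k A) (liftL k B)"
| "liftL k (LBang A) = LBang (liftL k A)"
| "liftL k (LAll A) = LAll (liftL (Suc k) A)"
| "liftL k (LEx A) = LEx (liftL (Suc k) A)"

primrec substL :: "nat \<Rightarrow> 'f trm \<Rightarrow> ('f,'p) lform \<Rightarrow> ('f,'p) lform" where
  "substL k t (LAtom a) = LAtom (substA k t a)"
| "substL k t LOne = LOne"
| "substL k t LTop = LTop"
| "substL k t LZero = LZero"
| "substL k t (LTensor A B) = LTensor (substL k t A) (substL k t B)"
| "substL k t (LWith A B) = LWith (substL k t A) (substL k t B)"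
| "substL k t (LPlus A B) = LPlus (substL k t A) (substL k t B)"
| "substL k t (LLolli A B) = LLolli (substL k t A) (substL k t B)"
| "substL k t (LBang A) = LBang (substL k t A)"
| "substL k t (LAll A) = LAll (substL (Suc k) (liftT 0 t) A)"
| "substL k t (LEx A) = LEx (substL (Suc k) (liftT 0 t) A)"

text \<open>Sequent calculus for intuitionistic linear logic plus weakening (with cut).
  Contexts are multisets; eigenvariables are handled by lifting the context.\<close>

inductive ial :: "('f,'p) lform multiset \<Rightarrow> ('f,'p) lform \<Rightarrow> bool" (infix "\<turnstile>\<^sub>a" 50) where
  Ax: "{#A#} \<turnstile>\<^sub>a A"
| Cut: "\<Gamma> \<turnstile>\<^sub>a A \<Longrightarrow> \<Delta> + {#A#} \<turnstile>\<^sub>a C \<Longrightarrow> \<Gamma> + \<Delta> \<turnstile>\<^sub>a C"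
| Weak: "\<Gamma> \<turnstile>\<^sub>a C \<Longrightarrow> \<Gamma> + {#A#} \<turnstile>\<^sub>a C"
| Contr: "\<Gamma> + {#LBang A, LBang A#} \<turnstile>\<^sub>a C \<Longrightarrow> \<Gamma> + {#LBang A#} \<turnstile>\<^sub>a C"
| Derel: "\<Gamma> + {#A#} \<turnstile>\<^sub>a C \<Longrightarrow> \<Gamma> + {#LBang A#} \<turnstile>\<^sub>a C"
| Prom: "(\<forall>B \<in># \<Gamma>. \<exists>B'. B = LBang B') \<Longrightarrow> \<Gamma> \<turnstile>\<^sub>a A \<Longrightarrow> \<Gamma> \<turnstile>\<^sub>a LBang A"
| OneR: "{#} \<turnstile>\<^sub>a LOne"
| OneL: "\<Gamma> \<turnstile>\<^sub>a C \<Longrightarrow> \<Gamma> + {#LOne#} \<turnstile>\<^sub>a C"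
| TopR: "\<Gamma> \<turnstile>\<^sub>a LTop"
| ZeroL: "\<Gamma> + {#LZero#} \<turnstile>\<^sub>a C"
| TensorR: "\<Gamma> \<turnstile>\<^sub>a A \<Longrightarrow> \<Delta> \<turnstile>\<^sub>a B \<Longrightarrow> \<Gamma> + \<Delta> \<turnstile>\<^sub>a LTensor A B"
| TensorL: "\<Gamma> + {#A, B#} \<turnstile>\<^sub>a C \<Longrightarrow> \<Gamma> + {#LTensor A B#} \<turnstile>\<^sub>a C"
| WithR: "\<Gamma> \<turnstile>\<^sub>a A \<Longrightarrow> \<Gamma> \<turnstile>\<^sub>a B \<Longrightarrow> \<Gamma> \<turnstile>\<^sub>a LWith A B"
| WithL1: "\<Gamma> + {#A#} \<turnstile>\<^sub>a C \<Longrightarrow> \<Gamma> + {#LWith A B#} \<turnstile>\<^sub>a C"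
| WithL2: "\<Gamma> + {#B#} \<turnstile>\<^sub>a C \<Longrightarrow> \<Gamma> + {#LWith A B#} \<turnstile>\<^sub>a C"
| PlusR1: "\<Gamma> \<turnstile>\<^sub>a A \<Longrightarrow> \<Gamma> \<turnstile>\<^sub>a LPlus A B"
| PlusR2: "\<Gamma> \<turnstile>\<^sub>a B \<Longrightarrow> \<Gamma> \<turnstile>\<^sub>a LPlus A B"
| PlusL: "\<Gamma> + {#A#} \<turnstile>\<^sub>a C \<Longrightarrow> \<Gamma> + {#B#} \<turnstile>\<^sub>a C \<Longrightarrow> \<Gamma> + {#LPlus A B#} \<turnstile>\<^sub>a C"
| LolliR: "\<Gamma> + {#A#} \<turnstile>\<^sub>a B \<Longrightarrow> \<Gamma> \<turnstile>\<^sub>a LLolli A B"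
| LolliL: "\<Gamma> \<turnstile>\<^sub>a A \<Longrightarrow> \<Delta> + {#B#} \<turnstile>\<^sub>a C \<Longrightarrow> \<Gamma> + \<Delta> + {#LLolli A B#} \<turnstile>\<^sub>a C"
| AllR: "image_mset (liftL 0) \<Gamma> \<turnstile>\<^sub>a A \<Longrightarrow> \<Gamma> \<turnstile>\<^sub>a LAll A"
| AllL: "\<Gamma> + {#substL 0 t A#} \<turnstile>\<^sub>a C \<Longrightarrow> \<Gamma> + {#LAll A#} \<turnstile>\<^sub>a C"
| ExR: "\<Gamma> \<turnstile>\<^sub>a substL 0 t A \<Longrightarrow> \<Gamma> \<turnstile>\<^sub>a LEx A"
| ExL: "image_mset (liftL 0) \<Gamma> + {#A#} \<turnstile>\<^sub>a liftL 0 C \<Longrightarrow> \<Gamma> + {#LEx A#} \<turnstile>\<^sub>a C"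

primrec trG :: "('f,'p) goal \<Rightarrow> ('f,'p) lform"
and trD :: "('f,'p) prog \<Rightarrow> ('f,'p) lform" where
  "trG (GAtom a) = LAtom a"
| "trG (GAnd g1 g2) = LTensor (trG g1) (trG g2)"
| "trG (GAssume d g) = LLolli (LBang (trD d)) (trG g)"
| "trG (GEx g) = LEx (trG g)"
| "trD (DAtom a) = LAtom a"
| "trD (DImp g d) = LLolli (trG g) (trD d)"
| "trD (DAll d) = LAll (trD d)"
| "trD (DChoice d1 d2) = LWith (trD d1) (trD d2)"
| "trD (DAnd d1 d2) = LTensor (trD d1) (trD d2)"

end

theory Submission
  imports Defs
begin

text \<open>Read the sequent calculus in the Kripke model whose worlds are programs ordered by
  inclusion, whose individuals are terms, and in which an atom holds at \<open>P\<close> iff it executes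
  from \<open>P\<close>. Every rule is valid there, every clause of \<open>P\<close> is forced at \<open>P\<close>, and every goal
  forced at \<open>P\<close> executes from \<open>P\<close>; the last fact is proved by induction on the number of
  connectives, simultaneously with its dual: a clause that only backchains to atoms which
  already execute is forced. Conversely, every execution step is mirrored by a derivation
  step, the banged program being duplicated by contraction wherever execution uses it twice.\<close>

primrec inst_trm :: "(nat \<Rightarrow> 'f trm) \<Rightarrow> 'f trm \<Rightarrow> 'f trm" where
  "inst_trm r (V i) = r i"
| "inst_trm r (Fn f ts) = Fn f (map (inst_trm r) ts)"

primrec inst_atm :: "(nat \<Rightarrow> 'f trm) \<Rightarrow> ('f,'p) atm \<Rightarrow> ('f,'p) atm" where
  "inst_atm r (Atm p ts) = Atm p (map (inst_trm r) ts)"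

lemma inst_trm_liftT: "inst_trm r (liftT k s) = inst_trm (\<lambda>i. if i < k then r i else r (Suc i)) s"
  by (induction s) auto

lemma inst_trm_substT:
  "inst_trm r (substT k t s) = inst_trm (\<lambda>i. if i < k then r i else if i = k then inst_trm r t else r (i - 1)) s"
  by (induction s) auto

lemma inst_trm_V [simp]: "inst_trm V s = s"
  by (induction s) (auto simp: map_idI)

lemma inst_atm_V [simp]: "inst_atm V a = a"
  by (cases a) (simp add: map_idI)

primrec forces :: "('f,'p) prog set \<Rightarrow> (nat \<Rightarrow> 'f trm) \<Rightarrow> ('f,'p) lform \<Rightarrow> bool" where
  "forces P r (LAtom a) = ex P (GAtom (inst_atm r a))"
| "forces P r LOne = True"
| "forces P r LTop = True"
| "forces P r LZero = False"
| "forces P r (LTensor A B) = (forces P r A \<and> forces P r B)"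
| "forces P r (LWith A B) = (forces P r A \<and> forces P r B)"
| "forces P r (LPlus A B) = (forces P r A \<or> forces P r B)"
| "forces P r (LLolli A B) = (\<forall>Q. P \<subseteq> Q \<longrightarrow> forces Q r A \<longrightarrow> forces Q r B)"
| "forces P r (LBang A) = forces P r A"
| "forces P r (LAll A) = (\<forall>t. forces P (case_nat t r) A)"
| "forces P r (LEx A) = (\<exists>t. forces P (case_nat t r) A)"

lemma forces_liftL: "forces P r (liftL k A) = forces P (\<lambda>i. if i < k then r i else r (Suc i)) A"
proof (induction A arbitrary: P r k)
  case (LAtom a)
  then show ?case by (cases a) (simp add: inst_trm_liftT comp_def)
next
  case (LAll A)
  have "case_nat t (\<lambda>i. if i < k then r i else r (Suc i))
      = (\<lambda>i. if i < Suc k then case_nat t r i else case_nat t r (Suc i))" for t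
    by (rule ext) (simp split: nat.split)
  with LAll show ?case by simp
next
  case (LEx A)
  have "case_nat t (\<lambda>i. if i < k then r i else r (Suc i))
      = (\<lambda>i. if i < Suc k then case_nat t r i else case_nat t r (Suc i))" for t
    by (rule ext) (simp split: nat.split)
  with LEx show ?case by simp
qed auto

lemma forces_substL:
  "forces P r (substL k t A)
    = forces P (\<lambda>i. if i < k then r i else if i = k then inst_trm r t else r (i - 1)) A"
proof (induction A arbitrary: P r k t)
  case (LAtom a)
  then show ?case by (cases a) (simp add: inst_trm_substT comp_def)
next
  case (LAll A)
  have "(\<lambda>i. if i < Suc k then case_nat u r i else if i = Suc k then inst_trm (case_nat u r) (liftT 0 t)
           else case_nat u r (i - 1))
      = case_nat u (\<lambda>i. if i < k then r i else if i = k then inst_trm r t else r (i - 1))" for u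
    by (rule ext) (auto simp: inst_trm_liftT split: nat.split)
  with LAll show ?case by simp
next
  case (LEx A)
  have "(\<lambda>i. if i < Suc k then case_nat u r i else if i = Suc k then inst_trm (case_nat u r) (liftT 0 t)
           else case_nat u r (i - 1))
      = case_nat u (\<lambda>i. if i < k then r i else if i = k then inst_trm r t else r (i - 1))" for u
    by (rule ext) (auto simp: inst_trm_liftT split: nat.split)
  with LEx show ?case by simp
qed auto

lemma forces_liftL0 [simp]: "forces P (case_nat t r) (liftL 0 A) = forces P r A"
  by (simp add: forces_liftL)

lemma forces_substL0 [simp]: "forces P r (substL 0 t A) = forces P (case_nat (inst_trm r t) r) A"
proof -
  have "(\<lambda>i. if i < 0 then r i else if i = 0 then inst_trm r t else r (i - 1)) = case_nat (inst_trm r t) r"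
    by (rule ext) (simp split: nat.split)
  then show ?thesis by (simp add: forces_substL)
qed

lemma
  shows ex_mono: "ex P G \<Longrightarrow> P \<subseteq> Q \<Longrightarrow> ex Q G"
    and bchain_mono: "bchain D P A \<Longrightarrow> P \<subseteq> Q \<Longrightarrow> bchain D Q A"
proof (induction arbitrary: Q and Q rule: ex_bchain.inducts)
  case (ex_assume D P G)
  then show ?case by (meson ex_bchain.ex_assume insert_mono)
qed (auto intro: ex_bchain.intros)

lemma forces_mono: "forces P r A \<Longrightarrow> P \<subseteq> Q \<Longrightarrow> forces Q r A"
  by (induction A arbitrary: P Q r) (auto intro: ex_mono dest: order_trans)

definition kripke_valid :: "('f,'p) lform multiset \<Rightarrow> ('f,'p) lform \<Rightarrow> bool" where
  "kripke_valid \<Gamma> C \<longleftrightarrow> (\<forall>P r. (\<forall>B\<in>#\<Gamma>. forces P r B) \<longrightarrow> forces P r C)"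

lemma ial_kripke_valid: "\<Gamma> \<turnstile>\<^sub>a C \<Longrightarrow> kripke_valid \<Gamma> C"
proof (induction rule: ial.induct)
  case (LolliR \<Gamma> A B)
  then show ?case unfolding kripke_valid_def by (simp; meson forces_mono)
next
  case (ExL \<Gamma> A C)
  then show ?case unfolding kripke_valid_def by (simp; metis forces_liftL0)
qed (simp_all add: kripke_valid_def; blast?)+

text \<open>The built-in \<open>size\<close> also counts term constructors, so it is not invariant under substitution.\<close>

primrec gsize :: "('f,'p) goal \<Rightarrow> nat" and dsize :: "('f,'p) prog \<Rightarrow> nat" where
  "gsize (GAtom a) = 0"
| "gsize (GAnd G1 G2) = Suc (gsize G1 + gsize G2)"
| "gsize (GAssume D G) = Suc (dsize D + gsize G)"
| "gsize (GEx G) = Suc (gsize G)"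
| "dsize (DAtom a) = 0"
| "dsize (DImp G D) = Suc (gsize G + dsize D)"
| "dsize (DAll D) = Suc (dsize D)"
| "dsize (DChoice D1 D2) = Suc (dsize D1 + dsize D2)"
| "dsize (DAnd D1 D2) = Suc (dsize D1 + dsize D2)"

lemma fixes G :: "('f,'p) goal" and D :: "('f,'p) prog"
  shows gsize_substG [simp]: "gsize (substG k t G) = gsize G"
    and dsize_substD [simp]: "dsize (substD k t D) = dsize D"
  by (induction G and D arbitrary: k t and k t) auto

lemma fixes G :: "('f,'p) goal" and D :: "('f,'p) prog"
  shows trG_substG: "trG (substG k t G) = substL k t (trG G)"
    and trD_substD: "trD (substD k t D) = substL k t (trD D)"
  by (induction G and D arbitrary: k t and k t) auto

lemma forces_trG_subst0 [simp]: "forces P V (trG (substG 0 t G)) = forces P (case_nat t V) (trG G)"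
  by (simp add: trG_substG)

lemma forces_trD_subst0 [simp]: "forces P V (trD (substD 0 t D)) = forces P (case_nat t V) (trD D)"
  by (simp add: trD_substD)

definition admissible_clause :: "('f,'p) prog \<Rightarrow> ('f,'p) prog set \<Rightarrow> bool" where
  "admissible_clause D P \<longleftrightarrow> (\<forall>Q A. P \<subseteq> Q \<longrightarrow> bchain D Q A \<longrightarrow> ex Q (GAtom A))"

lemma admissible_clause_member: "D \<in> P \<Longrightarrow> admissible_clause D P"
  unfolding admissible_clause_def by (blast intro: ex_atom)

lemma ex_if_forces_step:
  fixes G :: "('f,'p) goal"
  assumes goal_IH: "\<And>(G' :: ('f,'p) goal) P. gsize G' < gsize G \<Longrightarrow> forces P V (trG G') \<Longrightarrow> ex P G'"
    and clause_IH: "\<And>(D :: ('f,'p) prog) P. dsize D < gsize G \<Longrightarrow> admissible_clause D P \<Longrightarrow> forces P V (trD D)"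
    and forced: "forces P V (trG G)"
  shows "ex P G"
proof (cases G)
  case (GAtom a)
  with forced show ?thesis by simp
next
  case (GAnd G1 G2)
  with forced goal_IH[of G1 P] goal_IH[of G2 P] show ?thesis by (simp add: ex_and)
next
  case (GEx G')
  with forced obtain t where "forces P V (trG (substG 0 t G'))" by auto
  with GEx goal_IH[of "substG 0 t G'" P] show ?thesis by (simp add: ex_ex)
next
  case (GAssume D G')
  have "forces (insert D P) V (trD D)"
    using GAssume clause_IH[of D "insert D P"] admissible_clause_member[of D "insert D P"] by simp
  with forced GAssume have "forces (insert D P) V (trG G')" by auto
  with GAssume goal_IH[of G' "insert D P"] have "ex (insert D P) G'" by simp
  with GAssume show ?thesis by (simp add: ex_assume)
qed

lemma forces_if_admissible_step:
  fixes D :: "('f,'p) prog"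
  assumes goal_IH: "\<And>(G :: ('f,'p) goal) P. gsize G < dsize D \<Longrightarrow> forces P V (trG G) \<Longrightarrow> ex P G"
    and clause_IH: "\<And>(D' :: ('f,'p) prog) P. dsize D' < dsize D \<Longrightarrow> admissible_clause D' P \<Longrightarrow> forces P V (trD D')"
    and admissible: "admissible_clause D P"
  shows "forces P V (trD D)"
proof (cases D)
  case (DAtom a)
  with admissible show ?thesis by (simp add: admissible_clause_def bc_atom)
next
  case (DImp G D')
  have "forces Q V (trD D')" if "P \<subseteq> Q" "forces Q V (trG G)" for Q
  proof -
    have "ex Q G" using that DImp goal_IH[of G Q] by simp
    then have "admissible_clause D' Q"
      using admissible DImp \<open>P \<subseteq> Q\<close>
      unfolding admissible_clause_def by (meson bc_imp ex_mono order_trans)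
    with DImp clause_IH[of D' Q] show ?thesis by simp
  qed
  with DImp show ?thesis by simp
next
  case (DAll D')
  have "admissible_clause (substD 0 t D') P" for t
    using admissible DAll unfolding admissible_clause_def by (blast intro: bc_all)
  with DAll clause_IH[of "substD 0 _ D'" P] show ?thesis by simp
next
  case (DChoice D1 D2)
  have "admissible_clause D1 P" "admissible_clause D2 P"
    using admissible DChoice unfolding admissible_clause_def by (blast intro: ex_bchain.intros)+
  with DChoice clause_IH[of D1 P] clause_IH[of D2 P] show ?thesis by simp
next
  case (DAnd D1 D2)
  have "admissible_clause D1 P" "admissible_clause D2 P"
    using admissible DAnd unfolding admissible_clause_def by (blast intro: ex_bchain.intros)+
  with DAnd clause_IH[of D1 P] clause_IH[of D2 P] show ?thesis by simp
qed

lemma fixes G :: "('f,'p) goal" and D :: "('f,'p) prog"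
  shows ex_if_forces: "forces P V (trG G) \<Longrightarrow> ex P G"
    and forces_if_admissible: "admissible_clause D P \<Longrightarrow> forces P V (trD D)"
proof -
  have "(\<forall>(G :: ('f,'p) goal) P. gsize G < n \<longrightarrow> forces P V (trG G) \<longrightarrow> ex P G) \<and>
        (\<forall>(D :: ('f,'p) prog) P. dsize D < n \<longrightarrow> admissible_clause D P \<longrightarrow> forces P V (trD D))" for n
  proof (induction n)
    case (Suc n)
    have "ex P G" if "gsize G < Suc n" "forces P V (trG G)" for G :: "('f,'p) goal" and P
      using Suc.IH that(1) by (intro ex_if_forces_step[OF _ _ that(2)]) auto
    moreover have "forces P V (trD D)" if "dsize D < Suc n" "admissible_clause D P"
      for D :: "('f,'p) prog" and P
      using Suc.IH that(1) by (intro forces_if_admissible_step[OF _ _ that(2)]) auto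
    ultimately show ?case by blast
  qed simp
  then show "forces P V (trG G) \<Longrightarrow> ex P G" "admissible_clause D P \<Longrightarrow> forces P V (trD D)"
    by blast+
qed

lemmas ial_weak = Weak[simplified]
lemmas ial_contr = Contr[simplified]
lemmas ial_derel = Derel[simplified]
lemmas ial_tensorL = TensorL[simplified]
lemmas ial_withL1 = WithL1[simplified]
lemmas ial_withL2 = WithL2[simplified]
lemmas ial_lolliR = LolliR[simplified]
lemmas ial_lolliL = LolliL[simplified]
lemmas ial_allL = AllL[simplified]

lemma ial_weaken: "\<Gamma> \<turnstile>\<^sub>a C \<Longrightarrow> \<Gamma> + \<Delta> \<turnstile>\<^sub>a C"
  by (induction \<Delta>) (simp_all add: ial_weak)

lemma ial_contract_banged:
  assumes "\<forall>B\<in>#\<Delta>. \<exists>B'. B = LBang B'" and "\<Gamma> + \<Delta> + \<Delta> \<turnstile>\<^sub>a C"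
  shows "\<Gamma> + \<Delta> \<turnstile>\<^sub>a C"
  using assms
proof (induction \<Delta> arbitrary: \<Gamma>)
  case (add B \<Delta>)
  then obtain B' where B: "B = LBang B'" by auto
  from add.prems have "add_mset B (add_mset B \<Gamma>) + \<Delta> + \<Delta> \<turnstile>\<^sub>a C" by simp
  with add.IH[of "add_mset B (add_mset B \<Gamma>)"] add.prems(1)
  have "add_mset B (add_mset B (\<Gamma> + \<Delta>)) \<turnstile>\<^sub>a C" by simp
  with B show ?case by (simp add: ial_contr)
qed simp

abbreviation banged :: "('f,'p) prog set \<Rightarrow> ('f,'p) lform multiset" where
  "banged P \<equiv> image_mset (\<lambda>D. LBang (trD D)) (mset_set P)"

lemma banged_contract: "\<Gamma> + banged P + banged P \<turnstile>\<^sub>a C \<Longrightarrow> \<Gamma> + banged P \<turnstile>\<^sub>a C"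
  by (rule ial_contract_banged) auto

lemma
  shows ex_derivable: "ex P G \<Longrightarrow> finite P \<Longrightarrow> banged P \<turnstile>\<^sub>a trG G"
    and bchain_derivable: "bchain D P A \<Longrightarrow> finite P \<Longrightarrow> add_mset (trD D) (banged P) \<turnstile>\<^sub>a LAtom A"
proof (induction rule: ex_bchain.inducts)
  case (bc_atom A P)
  show ?case using ial_weaken[OF Ax[of "LAtom A"], of "banged P"] by simp
next
  case (bc_imp P G D A)
  then have "{#LLolli (trG G) (trD D)#} + banged P + banged P \<turnstile>\<^sub>a LAtom A"
    using ial_lolliL by fastforce
  then show ?case using banged_contract by fastforce
next
  case (bc_all t D P A)
  then show ?case by (auto simp: trD_substD intro: ial_allL)
next
  case (bc_and1 D0 P A D1)
  then have "add_mset (trD D1) (add_mset (trD D0) (banged P)) \<turnstile>\<^sub>a LAtom A"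
    by (simp add: ial_weak)
  then show ?case by (simp add: add_mset_commute ial_tensorL)
next
  case (bc_and2 D1 P A D0)
  then show ?case by (auto intro: ial_tensorL ial_weak)
next
  case (bc_choice1 D0 P A D1)
  then show ?case by (auto intro: ial_withL1)
next
  case (bc_choice2 D1 P A D0)
  then show ?case by (auto intro: ial_withL2)
next
  case (ex_atom D P A)
  then have banged_P: "banged P = add_mset (LBang (trD D)) (banged (P - {D}))"
    by (simp add: mset_set.remove)
  from ex_atom have "add_mset (LBang (trD D)) (banged P) \<turnstile>\<^sub>a LAtom A"
    by (auto intro: ial_derel)
  then show ?case unfolding banged_P by (simp add: ial_contr)
next
  case (ex_and P G1 G2)
  then have "{#} + banged P + banged P \<turnstile>\<^sub>a LTensor (trG G1) (trG G2)"
    by (simp add: TensorR)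
  then show ?case using banged_contract by fastforce
next
  case (ex_ex P t G)
  then show ?case by (auto simp: trG_substG intro: ExR)
next
  case (ex_assume D P G)
  then have "add_mset (LBang (trD D)) (banged P) \<turnstile>\<^sub>a trG G"
    by (cases "D \<in> P") (auto simp: insert_absorb intro: ial_weak)
  then show ?case by (simp add: ial_lolliR)
qed

theorem mainTheorem1:
  fixes P :: "('f,'p) prog set" and G :: "('f,'p) goal"
  assumes "finite P"
  shows "ex P G \<longleftrightarrow> image_mset (\<lambda>D. LBang (trD D)) (mset_set P) \<turnstile>\<^sub>a trG G"
proof
  assume "ex P G"
  then show "banged P \<turnstile>\<^sub>a trG G" using assms by (rule ex_derivable)
next
  assume "banged P \<turnstile>\<^sub>a trG G"
  then have "kripke_valid (banged P) (trG G)" by (rule ial_kripke_valid)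
  moreover have "\<forall>B\<in>#banged P. forces P V B"
    using assms by (auto intro: forces_if_admissible admissible_clause_member)
  ultimately have "forces P V (trG G)" unfolding kripke_valid_def by blast
  then show "ex P G" by (rule ex_if_forces)
qed

end
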